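(* There exist integers $n\ge2$ and $D\ge1$ and a set $X_n=\{\mathbf{x}^0,\ldots,\mathbf{x}^{n-1}\}\subseteq\{0,1\}^D$ of $n$ pairwise distinct vectors such that there is no three-layer Boolean threshold network with layer sizes $D$, $\lceil\log_2 n\rceil$, $D$ that is a perfect autoencoder for $X_n$ (with the second layer as middle layer).
   Context: A Boolean threshold function is a map $\{0,1\}^h\to\{0,1\}$, $\mathbf{u}\mapsto[\mathbf{w}\cdot\mathbf{u}\ge\theta]$ (value $1$ iff $\mathbf{w}\cdot\mathbf{u}\ge\theta$) with $\mathbf{w}\in\mathbb{Z}^h,\theta\in\mathbb{Z}$. A three-layer Boolean threshold network with layer sizes $D,d,D$ consists of maps $\mathbf{f}:\{0,1\}^D\to\{0,1\}^d$ and $\mathbf{g}:\{0,1\}^d\to\{0,1\}^D$ each of whose coordinates is a Boolean threshold function, computing $\mathbf{x}\mapsto\mathbf{g}(\mathbf{f}(\mathbf{x}))$. It is a perfect autoencoder for $X_n$ if $\mathbf{g}(\mathbf{f}(\mathbf{x}^i))=\mathbf{x}^i$ for all $i$. *)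

theory Defs
  imports Complex_Main
begin

definition threshold_fun :: "nat \<Rightarrow> (bool list \<Rightarrow> bool) \<Rightarrow> bool" where
  "threshold_fun h \<phi> \<longleftrightarrow>
     (\<exists>(w :: int list) (\<theta> :: int). length w = h \<and>
        (\<forall>u. length u = h \<longrightarrow>
           (\<phi> u \<longleftrightarrow> (\<Sum>i<h. w ! i * (if u ! i then 1 else 0)) \<ge> \<theta>)))"

definition net_apply :: "nat \<Rightarrow> nat \<Rightarrow> (nat \<Rightarrow> bool list \<Rightarrow> bool) \<Rightarrow> (nat \<Rightarrow> bool list \<Rightarrow> bool)
    \<Rightarrow> bool list \<Rightarrow> bool list" where
  "net_apply D d f g x = map (\<lambda>j. g j (map (\<lambda>i. f i x) [0..<d])) [0..<D]"

definition perfect_autoencoder_exists :: "nat \<Rightarrow> nat \<Rightarrow> bool list set \<Rightarrow> bool" where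
  "perfect_autoencoder_exists D d X \<longleftrightarrow>
     (\<exists>f g. (\<forall>i<d. threshold_fun D (f i)) \<and> (\<forall>j<D. threshold_fun d (g j)) \<and>
            (\<forall>x\<in>X. net_apply D d f g x = x))"

end

theory Submission
  imports Defs
begin

text \<open>The four even-weight words of length 3 must be sent bijectively onto the four
  hidden codes of length 2. Any two distinct even-weight words agree in exactly one
  coordinate, and so do the remaining two, with the opposite value; hence the decoder
  for that coordinate would have to compute XOR or XNOR of the two hidden bits. No
  threshold function does this, since it cannot accept u, u' and reject v, v' when
  u + u' = v + v' as integer vectors.\<close>

lemma threshold_fun_asummable:
  assumes "threshold_fun h \<phi>"
    and lengths: "length u = h" "length u' = h" "length v = h" "length v' = h"
    and sums: "\<And>i. i < h \<Longrightarrow>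
      (if u ! i then 1 else 0) + (if u' ! i then 1 else 0) =
      (if v ! i then 1 else 0) + ((if v' ! i then 1 else 0) :: int)"
    and "\<phi> u" "\<phi> u'"
  shows "\<phi> v \<or> \<phi> v'"
proof -
  obtain w \<theta> where
    E: "\<And>x. length x = h \<Longrightarrow> \<phi> x \<longleftrightarrow> (\<Sum>i<h. w ! i * (if x ! i then 1 else 0)) \<ge> (\<theta>::int)"
    using assms(1) unfolding threshold_fun_def by blast
  define dot where "dot x = (\<Sum>i<h. w ! i * (if x ! i then 1 else 0))" for x :: "bool list"
  have "dot u + dot u' = dot v + dot v'"
    unfolding dot_def sum.distrib[symmetric] distrib_left[symmetric] using sums by simp
  moreover have "dot u \<ge> \<theta>" "dot u' \<ge> \<theta>"
    using E lengths \<open>\<phi> u\<close> \<open>\<phi> u'\<close> by (auto simp: dot_def)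
  ultimately have "dot v \<ge> \<theta> \<or> dot v' \<ge> \<theta>" by linarith
  then show ?thesis using E lengths by (auto simp: dot_def)
qed

lemma threshold_fun_2_not_xor:
  assumes "threshold_fun 2 \<phi>"
  shows "\<not> (\<phi> [False, False] = \<phi> [True, True] \<and> \<phi> [True, False] = \<phi> [False, True]
            \<and> \<phi> [False, False] \<noteq> \<phi> [True, False])"
proof -
  have sums: "(if [False, False] ! i then 1 else 0) + (if [True, True] ! i then 1 else 0) =
      (if [True, False] ! i then 1 else 0) + ((if [False, True] ! i then 1 else 0) :: int)"
    if "i < 2" for i
    using that by (auto simp: less_2_cases_iff)
  show ?thesis
    using threshold_fun_asummable[OF assms _ _ _ _ sums]
      threshold_fun_asummable[OF assms _ _ _ _ sums[symmetric]]
    by auto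
qed

definition hidden_code :: "nat \<Rightarrow> (nat \<Rightarrow> bool list \<Rightarrow> bool) \<Rightarrow> bool list \<Rightarrow> bool list" where
  "hidden_code d f x = map (\<lambda>i. f i x) [0..<d]"

lemma length_net_apply: "length (net_apply D d f g x) = D"
  by (simp add: net_apply_def)

lemma nth_net_apply: "j < D \<Longrightarrow> net_apply D d f g x ! j = g j (hidden_code d f x)"
  by (simp add: net_apply_def hidden_code_def)

lemma inj_on_hidden_code:
  assumes "\<forall>x\<in>X. net_apply D d f g x = x"
  shows "inj_on (hidden_code d f) X"
proof
  fix x y assume xy: "x \<in> X" "y \<in> X" "hidden_code d f x = hidden_code d f y"
  then have "net_apply D d f g x = net_apply D d f g y"
    by (intro nth_equalityI) (simp_all add: length_net_apply nth_net_apply)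
  then show "x = y" using assms xy by simp
qed

lemma card_bool_lists_length: "card {u :: bool list. length u = d} = 2 ^ d"
  using card_lists_length_eq[of "UNIV :: bool set" d] by simp

lemma hidden_code_image_eq_words:
  assumes "inj_on (hidden_code d f) X" "card X = 2 ^ d"
  shows "hidden_code d f ` X = {u. length u = d}"
proof (rule card_subset_eq)
  show "finite {u :: bool list. length u = d}"
    using finite_lists_length_eq[of "UNIV :: bool set" d] by simp
  show "card (hidden_code d f ` X) = card {u :: bool list. length u = d}"
    using assms by (simp add: card_image card_bool_lists_length)
  show "hidden_code d f ` X \<subseteq> {u. length u = d}"
    by (auto simp: hidden_code_def)
qed

lemma nat_ceiling_log2_power: "nat \<lceil>log 2 (real (2 ^ d))\<rceil> = d"
  using log2_of_power_eq[of "2 ^ d" d] by simp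

definition even_weight_code :: "bool list list" where
  "even_weight_code = [[False, False, False], [False, True, True], [True, False, True], [True, True, False]]"

lemma even_weight_code_square:
  assumes "a \<in> set even_weight_code" "b \<in> set even_weight_code"
    "c \<in> set even_weight_code" "e \<in> set even_weight_code"
    "distinct [a, b, c, e]"
  shows "\<exists>j<3. a ! j = e ! j \<and> b ! j = c ! j \<and> a ! j \<noteq> b ! j"
proof (rule ccontr)
  assume "\<not> ?thesis"
  then have "\<not> (a ! j = e ! j \<and> b ! j = c ! j \<and> a ! j \<noteq> b ! j)" if "j < 3" for j
    using that by (metis (mono_tags) imageE mem_Collect_eq)
  from this[of 0] this[of 1] this[of 2] show False
    using assms unfolding even_weight_code_def
    by (simp only: list.set insert_iff empty_iff) (elim disjE; simp)
qed

lemma not_perfect_autoencoder_even_weight_code: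
  "\<not> perfect_autoencoder_exists 3 2 (set even_weight_code)"
proof
  assume "perfect_autoencoder_exists 3 2 (set even_weight_code)"
  then obtain f g where decoders: "\<forall>j<3. threshold_fun 2 (g j)"
    and exact: "\<forall>x\<in>set even_weight_code. net_apply 3 2 f g x = x"
    unfolding perfect_autoencoder_exists_def by blast
  let ?c = "hidden_code 2 f"
  have "?c ` set even_weight_code = {u. length u = 2}"
    using inj_on_hidden_code[OF exact]
    by (rule hidden_code_image_eq_words) (simp add: even_weight_code_def)
  then have onto: "\<exists>x\<in>set even_weight_code. ?c x = u" if "length u = 2" for u
    using that by (metis (mono_tags) imageE mem_Collect_eq)
  obtain a b c e where
    preimages: "a \<in> set even_weight_code" "b \<in> set even_weight_code"
      "c \<in> set even_weight_code" "e \<in> set even_weight_code"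
    and codes: "?c a = [False, False]" "?c b = [False, True]"
      "?c c = [True, False]" "?c e = [True, True]"
    using onto[of "[False, False]"] onto[of "[False, True]"]
      onto[of "[True, False]"] onto[of "[True, True]"] by auto
  then have "distinct [a, b, c, e]" by auto
  then obtain j where "j < 3" and xor: "a ! j = e ! j \<and> b ! j = c ! j \<and> a ! j \<noteq> b ! j"
    using even_weight_code_square preimages by blast
  have decodes: "g j (?c x) = x ! j" if "x \<in> set even_weight_code" for x
    using exact that nth_net_apply[of j 3 2 f g x] \<open>j < 3\<close> by simp
  show False
    using threshold_fun_2_not_xor[of "g j"] decoders \<open>j < 3\<close> xor
      decodes[OF preimages(1)] decodes[OF preimages(2)]
      decodes[OF preimages(3)] decodes[OF preimages(4)]
    unfolding codes by metis
qed

theorem corollary17: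
  shows "\<exists>(n::nat) (D::nat) (xs :: bool list list).
           n \<ge> 2 \<and> D \<ge> 1 \<and> length xs = n \<and> distinct xs \<and>
           (\<forall>x\<in>set xs. length x = D) \<and>
           \<not> perfect_autoencoder_exists D (nat \<lceil>log 2 (real n)\<rceil>) (set xs)"
proof (intro exI conjI)
  show "\<not> perfect_autoencoder_exists 3 (nat \<lceil>log 2 (real 4)\<rceil>) (set even_weight_code)"
    using not_perfect_autoencoder_even_weight_code nat_ceiling_log2_power[of 2] by simp
qed (auto simp: even_weight_code_def)

end
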